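(* Let $L$ be a lattice diagram with $n$ cells $(p_1,q_1)<\dots<(p_n,q_n)$, listed in the order described below, and let $k\ge1$ be an integer. Then $$e_k(\partial X)\,\Delta_L(X,Y)=\sum_{1\le i_1<\dots<i_k\le n}\epsilon\big(L,e_k(i_1,\dots,i_k;L)\big)\,\Delta_{e_k(i_1,\dots,i_k;L)}(X,Y).$$ Here $e_k(i_1,\dots,i_k;L)$ is the diagram obtained from $L$ by replacing the biexponents $(p_{i_1},q_{i_1}),\dots,(p_{i_k},q_{i_k})$ by $(p_{i_1}-1,q_{i_1}),\dots,(p_{i_k}-1,q_{i_k})$ and keeping the others unchanged. For each term with $\Delta_{e_k(i_1,\dots,i_k;L)}\neq0$, the coefficient $\epsilon(L,e_k(i_1,\dots,i_k;L))$ is a positive integer, namely $\epsilon(L,L')=\prod_{t=1}^n p_t!\,q_t!\big/\prod_{t=1}^n p'_t!\,q'_t!$, where $(p'_t,q'_t)$ are the biexponents of $L'$.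
   Context: A lattice diagram is a finite subset of $\mathbb{N}\times\mathbb{N}$. Its cells $(p,q)$ are listed in the order where $(p,q)<(p',q')$ iff $q<q'$, or $q=q'$ and $p<p'$. For such a list $(p_1,q_1),\dots,(p_n,q_n)$, $\Delta_L(X,Y)=\det(x_r^{p_t}y_r^{q_t})_{1\le r,t\le n}$ with $X=(x_1,\dots,x_n)$ and $Y=(y_1,\dots,y_n)$. This determinant is zero when two biexponents coincide. A term involving a negative exponent is understood to be zero, since its coefficient vanishes. The function $e_k$ is the $k$-th elementary symmetric function, and $e_k(\partial X)$ is obtained from it by substituting $\partial/\partial x_r$ for $x_r$. *)

theory Defs
  imports "HOL-Analysis.Derivative" "Jordan_Normal_Form.Determinant"
begin

definition cell_less :: "nat \<times> nat \<Rightarrow> nat \<times> nat \<Rightarrow> bool" where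
  "cell_less c c' \<longleftrightarrow> snd c < snd c' \<or> (snd c = snd c' \<and> fst c < fst c')"

definition Delta :: "(int \<times> int) list \<Rightarrow> (nat \<Rightarrow> real) \<Rightarrow> (nat \<Rightarrow> real) \<Rightarrow> real" where
  "Delta bs X Y =
     (if (\<forall>b\<in>set bs. fst b \<ge> 0 \<and> snd b \<ge> 0)
      then det (mat (length bs) (length bs)
             (\<lambda>(r, t). X r ^ nat (fst (bs ! t)) * Y r ^ nat (snd (bs ! t))))
      else 0)"

definition int_cells :: "(nat \<times> nat) list \<Rightarrow> (int \<times> int) list" where
  "int_cells cs = map (\<lambda>(p, q). (int p, int q)) cs"

definition Delta_L :: "(nat \<times> nat) list \<Rightarrow> (nat \<Rightarrow> real) \<Rightarrow> (nat \<Rightarrow> real) \<Rightarrow> real" where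
  "Delta_L cs = Delta (int_cells cs)"

text \<open>e_k(i_1,...,i_k;L): positions in S (0-based) get p lowered by 1.\<close>
definition ek_diag :: "nat set \<Rightarrow> (nat \<times> nat) list \<Rightarrow> (int \<times> int) list" where
  "ek_diag S cs = map (\<lambda>t. (int (fst (cs ! t)) - (if t \<in> S then 1 else 0), int (snd (cs ! t))))
                    [0..<length cs]"

definition epsilon :: "(nat \<times> nat) list \<Rightarrow> (int \<times> int) list \<Rightarrow> real" where
  "epsilon cs bs =
     (\<Prod>t<length cs. fact (fst (cs ! t)) * fact (snd (cs ! t)))
     / (\<Prod>t<length bs. fact (nat (fst (bs ! t))) * fact (nat (snd (bs ! t))))"

definition dx :: "nat \<Rightarrow> ((nat \<Rightarrow> real) \<Rightarrow> (nat \<Rightarrow> real) \<Rightarrow> real)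
                      \<Rightarrow> ((nat \<Rightarrow> real) \<Rightarrow> (nat \<Rightarrow> real) \<Rightarrow> real)" where
  "dx r f = (\<lambda>X Y. deriv (\<lambda>s. f (X(r := s)) Y) (X r))"

definition ek_dX :: "nat \<Rightarrow> nat \<Rightarrow> ((nat \<Rightarrow> real) \<Rightarrow> (nat \<Rightarrow> real) \<Rightarrow> real)
                      \<Rightarrow> ((nat \<Rightarrow> real) \<Rightarrow> (nat \<Rightarrow> real) \<Rightarrow> real)" where
  "ek_dX n k f = (\<lambda>X Y. \<Sum>S\<in>{S. S \<subseteq> {..<n} \<and> card S = k}.
                    foldr dx (sorted_list_of_set S) f X Y)"

end

theory Submission
  imports Defs
begin

text \<open>
  By the Leibniz formula, \<open>\<Delta>\<^sub>L\<close> is a signed sum over permutations \<open>\<sigma>\<close> of the monomials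
  \<open>\<Prod>\<^sub>r x\<^sub>r ^ p(\<sigma> r) * y\<^sub>r ^ q(\<sigma> r)\<close>. Differentiating in the variables \<open>x\<^sub>r\<close>, \<open>r \<in> S\<close>,
  multiplies such a monomial by \<open>\<Prod>\<^sub>r\<^sub>\<in>\<^sub>S p(\<sigma> r)\<close> and lowers these exponents by one; with
  \<open>T = \<sigma> ` S\<close> this is the \<open>\<sigma>\<close>-term of \<open>\<Delta>\<close> of the diagram \<open>e\<^sub>k(T; L)\<close>, weighted by
  \<open>\<Prod>\<^sub>t\<^sub>\<in>\<^sub>T p t\<close>. Since \<open>S \<mapsto> \<sigma> ` S\<close> permutes the \<open>k\<close>-subsets, the sum over \<open>S\<close> and \<open>\<sigma>\<close> regroups
  into \<open>\<Sum>\<^sub>T (\<Prod>\<^sub>t\<^sub>\<in>\<^sub>T p t) \<Delta>(e\<^sub>k(T; L))\<close>, and \<open>p! = p (p - 1)!\<close> shows \<open>\<Prod>\<^sub>t\<^sub>\<in>\<^sub>T p t = \<epsilon>(L, e\<^sub>k(T; L))\<close>.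
  If some \<open>p t = 0\<close>, the weight and \<open>\<Delta>(e\<^sub>k(T; L))\<close> (which has a negative exponent) both vanish.
\<close>

definition monomial ::
    "nat \<Rightarrow> (nat \<Rightarrow> nat) \<Rightarrow> (nat \<Rightarrow> nat) \<Rightarrow> (nat \<Rightarrow> real) \<Rightarrow> (nat \<Rightarrow> real) \<Rightarrow> real"
  where "monomial n a b X Y = (\<Prod>r<n. X r ^ a r * Y r ^ b r)"

text \<open>At \<open>a r = 0\<close> the subtraction truncates; this is harmless, as differentiation then
  contributes the factor \<open>a r = 0\<close>.\<close>

definition lower :: "nat set \<Rightarrow> (nat \<Rightarrow> nat) \<Rightarrow> nat \<Rightarrow> nat"
  where "lower S a r = (if r \<in> S then a r - 1 else a r)"

lemma lower_empty [simp]: "lower {} a = a"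
  by (simp add: lower_def fun_eq_iff)

lemma lower_lower_singleton:
  "x \<notin> S \<Longrightarrow> lower {x} (lower S a) = lower (insert x S) a"
  by (auto simp: lower_def fun_eq_iff)

lemma lower_comp_inj:
  "inj \<sigma> \<Longrightarrow> lower S (\<lambda>r. a (\<sigma> r)) = (\<lambda>r. lower (\<sigma> ` S) a (\<sigma> r))"
  by (simp add: lower_def fun_eq_iff inj_image_mem_iff)

lemma has_field_derivative_monomial:
  assumes "r0 < n"
  shows "((\<lambda>s. monomial n a b (X(r0 := s)) Y) has_field_derivative
           real (a r0) * monomial n (lower {r0} a) b X Y) (at (X r0))"
proof -
  define C where "C = (\<Prod>r\<in>{..<n} - {r0}. X r ^ a r * Y r ^ b r)"
  have split: "monomial n a' b X' Y = X' r0 ^ a' r0 * Y r0 ^ b r0 * C"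
    if "\<forall>r\<in>{..<n} - {r0}. X' r = X r \<and> a' r = a r" for X' a'
  proof -
    have "(\<Prod>r\<in>{..<n} - {r0}. X' r ^ a' r * Y r ^ b r) = C"
      unfolding C_def using that by (intro prod.cong) auto
    then show ?thesis
      using assms by (simp add: monomial_def prod.remove[of "{..<n}" r0])
  qed
  have "((\<lambda>s. s ^ a r0 * Y r0 ^ b r0 * C) has_field_derivative
          real (a r0) * (X r0 ^ (a r0 - 1) * Y r0 ^ b r0 * C)) (at (X r0))"
    by (auto intro!: derivative_eq_intros)
  moreover have "monomial n (lower {r0} a) b X Y = X r0 ^ (a r0 - 1) * Y r0 ^ b r0 * C"
    by (subst split) (auto simp: lower_def)
  moreover have "monomial n a b (X(r0 := s)) Y = s ^ a r0 * Y r0 ^ b r0 * C" for s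
    by (subst split) auto
  ultimately show ?thesis
    by simp
qed

lemma dx_monomial_sum:
  assumes "r0 < n" "finite I"
  shows "dx r0 (\<lambda>X Y. \<Sum>i\<in>I. w i * monomial n (a i) (b i) X Y)
       = (\<lambda>X Y. \<Sum>i\<in>I. w i * real (a i r0) * monomial n (lower {r0} (a i)) (b i) X Y)"
proof (intro ext)
  fix X Y
  have "((\<lambda>s. \<Sum>i\<in>I. w i * monomial n (a i) (b i) (X(r0 := s)) Y) has_field_derivative
          (\<Sum>i\<in>I. w i * (real (a i r0) * monomial n (lower {r0} (a i)) (b i) X Y))) (at (X r0))"
    using assms(1) by (intro DERIV_sum DERIV_cmult has_field_derivative_monomial)
  then show "dx r0 (\<lambda>X Y. \<Sum>i\<in>I. w i * monomial n (a i) (b i) X Y) X Y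
           = (\<Sum>i\<in>I. w i * real (a i r0) * monomial n (lower {r0} (a i)) (b i) X Y)"
    unfolding dx_def by (simp add: DERIV_imp_deriv mult.assoc)
qed

lemma foldr_dx_monomial_sum:
  assumes "distinct L" "set L \<subseteq> {..<n}" "finite I"
  shows "foldr dx L (\<lambda>X Y. \<Sum>i\<in>I. w i * monomial n (a i) (b i) X Y)
       = (\<lambda>X Y. \<Sum>i\<in>I. w i * (\<Prod>r\<in>set L. real (a i r)) * monomial n (lower (set L) (a i)) (b i) X Y)"
  using assms(1,2)
proof (induction L)
  case Nil
  then show ?case by simp
next
  case (Cons x L)
  then have x: "x < n" "x \<notin> set L"
    by auto
  have "foldr dx (x # L) (\<lambda>X Y. \<Sum>i\<in>I. w i * monomial n (a i) (b i) X Y)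
      = dx x (\<lambda>X Y. \<Sum>i\<in>I. (w i * (\<Prod>r\<in>set L. real (a i r))) * monomial n (lower (set L) (a i)) (b i) X Y)"
    using Cons by simp
  also have "\<dots> = (\<lambda>X Y. \<Sum>i\<in>I. w i * (\<Prod>r\<in>set L. real (a i r)) * real (lower (set L) (a i) x)
                        * monomial n (lower {x} (lower (set L) (a i))) (b i) X Y)"
    using x(1) assms(3) by (rule dx_monomial_sum)
  also have "\<dots> = (\<lambda>X Y. \<Sum>i\<in>I. w i * (\<Prod>r\<in>set (x # L). real (a i r))
                        * monomial n (lower (set (x # L)) (a i)) (b i) X Y)"
    using x by (simp add: lower_lower_singleton lower_def mult_ac)
  finally show ?case .
qed

lemma permutes_lessThan_less: "\<sigma> permutes {..<n} \<Longrightarrow> r < n \<Longrightarrow> \<sigma> r < n"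
  using permutes_in_image by fastforce

lemma det_mat_Leibniz:
  "det (mat n n f) = (\<Sum>\<sigma> | \<sigma> permutes {..<n}. signof \<sigma> * (\<Prod>i<n. f (i, \<sigma> i)))"
proof -
  have "det (mat n n f) = (\<Sum>\<sigma> | \<sigma> permutes {..<n}. signof \<sigma> * (\<Prod>i<n. mat n n f $$ (i, \<sigma> i)))"
    by (subst det_def') (auto simp: atLeast0LessThan)
  also have "\<dots> = (\<Sum>\<sigma> | \<sigma> permutes {..<n}. signof \<sigma> * (\<Prod>i<n. f (i, \<sigma> i)))"
    by (intro sum.cong refl arg_cong2[where f = "(*)"] prod.cong)
       (use permutes_lessThan_less in fastforce)
  finally show ?thesis .
qed

lemma nth_ek_diag:
  "t < length cs \<Longrightarrow>
     ek_diag T cs ! t = (int (fst (cs ! t)) - (if t \<in> T then 1 else 0), int (snd (cs ! t)))"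
  by (simp add: ek_diag_def)

lemma length_ek_diag [simp]: "length (ek_diag T cs) = length cs"
  by (simp add: ek_diag_def)

lemma nat_nth_ek_diag:
  assumes "t < length cs"
  shows "nat (fst (ek_diag T cs ! t)) = lower T (\<lambda>t. fst (cs ! t)) t"
    and "nat (snd (ek_diag T cs ! t)) = snd (cs ! t)"
  using assms by (auto simp: nth_ek_diag lower_def nat_diff_distrib)

lemma ek_diag_nonneg_iff:
  assumes "T \<subseteq> {..<length cs}"
  shows "(\<forall>b\<in>set (ek_diag T cs). 0 \<le> fst b \<and> 0 \<le> snd b) \<longleftrightarrow> (\<forall>t\<in>T. 0 < fst (cs ! t))"
  using assms by (force simp: ek_diag_def)

lemma Delta_ek_diag:
  assumes "T \<subseteq> {..<length cs}"
  shows "Delta (ek_diag T cs) X Y =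
           (if \<forall>t\<in>T. 0 < fst (cs ! t)
            then \<Sum>\<sigma> | \<sigma> permutes {..<length cs}. signof \<sigma> *
                   monomial (length cs) (\<lambda>r. lower T (\<lambda>t. fst (cs ! t)) (\<sigma> r)) (\<lambda>r. snd (cs ! \<sigma> r)) X Y
            else 0)"
proof -
  let ?n = "length cs"
  have "det (mat ?n ?n (\<lambda>(r, t). X r ^ nat (fst (ek_diag T cs ! t)) * Y r ^ nat (snd (ek_diag T cs ! t))))
      = (\<Sum>\<sigma> | \<sigma> permutes {..<?n}.
           signof \<sigma> * monomial ?n (\<lambda>r. lower T (\<lambda>t. fst (cs ! t)) (\<sigma> r)) (\<lambda>r. snd (cs ! \<sigma> r)) X Y)"
    unfolding det_mat_Leibniz monomial_def
  proof (intro sum.cong refl arg_cong2[where f = "(*)"] prod.cong)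
    fix \<sigma> r assume "\<sigma> \<in> {\<sigma>. \<sigma> permutes {..<?n}}" "r \<in> {..<?n}"
    then have "\<sigma> r < ?n"
      by (simp add: permutes_lessThan_less)
    then show "(case (r, \<sigma> r) of
                 (r, t) \<Rightarrow> X r ^ nat (fst (ek_diag T cs ! t)) * Y r ^ nat (snd (ek_diag T cs ! t)))
             = X r ^ lower T (\<lambda>t. fst (cs ! t)) (\<sigma> r) * Y r ^ snd (cs ! \<sigma> r)"
      by (simp add: nat_nth_ek_diag)
  qed
  then show ?thesis
    unfolding Delta_def ek_diag_nonneg_iff[OF assms] length_ek_diag by auto
qed

lemma int_cells_eq_ek_diag_empty: "int_cells cs = ek_diag {} cs"
  by (rule nth_equalityI) (simp_all add: int_cells_def nth_ek_diag case_prod_beta)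

lemma Delta_L_Leibniz:
  "Delta_L cs = (\<lambda>X Y. \<Sum>\<sigma> | \<sigma> permutes {..<length cs}.
     signof \<sigma> * monomial (length cs) (\<lambda>r. fst (cs ! \<sigma> r)) (\<lambda>r. snd (cs ! \<sigma> r)) X Y)"
  unfolding Delta_L_def int_cells_eq_ek_diag_empty
  by (intro ext) (simp add: Delta_ek_diag)

lemma epsilon_ek_diag:
  assumes "T \<subseteq> {..<length cs}" "\<forall>t\<in>T. 0 < fst (cs ! t)"
  shows "epsilon cs (ek_diag T cs) = (\<Prod>t\<in>T. real (fst (cs ! t)))"
proof -
  let ?n = "length cs" and ?p = "\<lambda>t. fst (cs ! t)"
  define D where "D = (\<Prod>t<?n. fact (lower T ?p t) * fact (snd (cs ! t)) :: real)"
  have "fact (?p t) = (if t \<in> T then real (?p t) else 1) * (fact (lower T ?p t) :: real)" for t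
    using assms(2) by (cases "t \<in> T") (auto simp: lower_def fact_reduce[of "?p t"])
  then have "(\<Prod>t<?n. fact (?p t) * fact (snd (cs ! t)) :: real)
      = (\<Prod>t<?n. if t \<in> T then real (?p t) else 1) * D"
    unfolding D_def by (simp add: prod.distrib mult.assoc)
  also have "(\<Prod>t<?n. if t \<in> T then real (?p t) else 1) = (\<Prod>t\<in>T. real (?p t))"
    using assms(1) by (simp add: prod.If_cases Int_absorb1)
  finally have "(\<Prod>t<?n. fact (?p t) * fact (snd (cs ! t)) :: real) = (\<Prod>t\<in>T. real (?p t)) * D" .
  moreover have "(\<Prod>t<?n. fact (nat (fst (ek_diag T cs ! t))) * fact (nat (snd (ek_diag T cs ! t)))) = D"
    unfolding D_def by (intro prod.cong) (simp_all add: nat_nth_ek_diag)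
  moreover have "D \<noteq> 0"
    unfolding D_def by (simp add: prod_zero_iff)
  ultimately show ?thesis
    unfolding epsilon_def by simp
qed

lemma epsilon_mult_Delta_ek_diag:
  assumes "T \<subseteq> {..<length cs}"
  shows "epsilon cs (ek_diag T cs) * Delta (ek_diag T cs) X Y =
           (\<Prod>t\<in>T. real (fst (cs ! t))) * (\<Sum>\<sigma> | \<sigma> permutes {..<length cs}.
              signof \<sigma> *
              monomial (length cs) (\<lambda>r. lower T (\<lambda>t. fst (cs ! t)) (\<sigma> r)) (\<lambda>r. snd (cs ! \<sigma> r)) X Y)"
proof (cases "\<forall>t\<in>T. 0 < fst (cs ! t)")
  case True
  then show ?thesis
    using assms by (simp add: epsilon_ek_diag Delta_ek_diag)
next
  case False
  moreover have "finite T"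
    using assms finite_subset by blast
  ultimately show ?thesis
    using assms by (auto simp: Delta_ek_diag prod_zero_iff)
qed

lemma epsilon_ek_diag_eq_pos_nat:
  assumes "T \<subseteq> {..<length cs}" "Delta (ek_diag T cs) \<noteq> (\<lambda>X Y. 0)"
  shows "\<exists>m::nat. 0 < m \<and> epsilon cs (ek_diag T cs) = real m"
proof -
  have positive: "\<forall>t\<in>T. 0 < fst (cs ! t)"
    using assms by (auto simp: Delta_ek_diag fun_eq_iff split: if_splits)
  moreover have "finite T"
    using assms finite_subset by blast
  ultimately show ?thesis
    using assms(1) by (intro exI[of _ "\<Prod>t\<in>T. fst (cs ! t)"]) (simp add: epsilon_ek_diag prod_pos)
qed

lemma permutes_image_subsets_bij_betw:
  assumes "\<sigma> permutes A"
  shows "bij_betw ((`) \<sigma>) {S. S \<subseteq> A \<and> card S = k} {S. S \<subseteq> A \<and> card S = k}"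
proof (rule bij_betw_byWitness[where f' = "(`) (inv_into UNIV \<sigma>)"])
  have inj: "inj_on \<sigma> S" "inj_on (inv_into UNIV \<sigma>) S" for S
    using permutes_inj[OF assms] permutes_inj[OF permutes_inv[OF assms]] by (auto intro: inj_on_subset)
  show "\<forall>S\<in>{S. S \<subseteq> A \<and> card S = k}. inv_into UNIV \<sigma> ` \<sigma> ` S = S"
       "\<forall>S\<in>{S. S \<subseteq> A \<and> card S = k}. \<sigma> ` inv_into UNIV \<sigma> ` S = S"
    by (simp_all add: image_image permutes_inverses[OF assms])
  show "(`) \<sigma> ` {S. S \<subseteq> A \<and> card S = k} \<subseteq> {S. S \<subseteq> A \<and> card S = k}"
       "(`) (inv_into UNIV \<sigma>) ` {S. S \<subseteq> A \<and> card S = k} \<subseteq> {S. S \<subseteq> A \<and> card S = k}"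
    using permutes_in_image[OF assms] permutes_in_image[OF permutes_inv[OF assms]]
    by (auto simp: card_image inj)
qed

lemma sum_subsets_permutes_image:
  "(\<Sum>S | S \<subseteq> A \<and> card S = k. \<Sum>\<sigma> | \<sigma> permutes A. G \<sigma> (\<sigma> ` S))
     = (\<Sum>T | T \<subseteq> A \<and> card T = k. \<Sum>\<sigma> | \<sigma> permutes A. G \<sigma> T)"
proof -
  have "(\<Sum>S | S \<subseteq> A \<and> card S = k. \<Sum>\<sigma> | \<sigma> permutes A. G \<sigma> (\<sigma> ` S))
      = (\<Sum>\<sigma> | \<sigma> permutes A. \<Sum>S | S \<subseteq> A \<and> card S = k. G \<sigma> (\<sigma> ` S))"
    by (rule sum.swap)
  also have "\<dots> = (\<Sum>\<sigma> | \<sigma> permutes A. \<Sum>T | T \<subseteq> A \<and> card T = k. G \<sigma> T)"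
    by (intro sum.cong refl sum.reindex_bij_betw permutes_image_subsets_bij_betw) simp
  also have "\<dots> = (\<Sum>T | T \<subseteq> A \<and> card T = k. \<Sum>\<sigma> | \<sigma> permutes A. G \<sigma> T)"
    by (rule sum.swap)
  finally show ?thesis .
qed

lemma ek_dX_Delta_L:
  "ek_dX (length cs) k (Delta_L cs) X Y =
     (\<Sum>T | T \<subseteq> {..<length cs} \<and> card T = k. epsilon cs (ek_diag T cs) * Delta (ek_diag T cs) X Y)"
proof -
  let ?n = "length cs" and ?p = "\<lambda>t. fst (cs ! t)"
  define G where "G \<sigma> T = signof \<sigma> * (\<Prod>t\<in>T. real (?p t)) *
    monomial ?n (\<lambda>r. lower T ?p (\<sigma> r)) (\<lambda>r. snd (cs ! \<sigma> r)) X Y" for \<sigma> T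
  have derivative:
    "foldr dx (sorted_list_of_set S) (Delta_L cs) X Y = (\<Sum>\<sigma> | \<sigma> permutes {..<?n}. G \<sigma> (\<sigma> ` S))"
    if "S \<subseteq> {..<?n}" for S
  proof -
    have "finite S"
      using that finite_subset by blast
    then have "foldr dx (sorted_list_of_set S) (Delta_L cs) X Y
        = (\<Sum>\<sigma> | \<sigma> permutes {..<?n}. signof \<sigma> * (\<Prod>r\<in>S. real (?p (\<sigma> r))) *
             monomial ?n (lower S (\<lambda>r. ?p (\<sigma> r))) (\<lambda>r. snd (cs ! \<sigma> r)) X Y)"
      unfolding Delta_L_Leibniz using that
      by (subst foldr_dx_monomial_sum) (auto simp: finite_permutations)
    also have "\<dots> = (\<Sum>\<sigma> | \<sigma> permutes {..<?n}. G \<sigma> (\<sigma> ` S))"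
      unfolding G_def
    proof (intro sum.cong refl)
      fix \<sigma> assume "\<sigma> \<in> {\<sigma>. \<sigma> permutes {..<?n}}"
      then have "inj \<sigma>"
        by (simp add: permutes_inj)
      then show "signof \<sigma> * (\<Prod>r\<in>S. real (?p (\<sigma> r))) *
             monomial ?n (lower S (\<lambda>r. ?p (\<sigma> r))) (\<lambda>r. snd (cs ! \<sigma> r)) X Y
          = signof \<sigma> * (\<Prod>t\<in>\<sigma> ` S. real (?p t)) *
             monomial ?n (\<lambda>r. lower (\<sigma> ` S) ?p (\<sigma> r)) (\<lambda>r. snd (cs ! \<sigma> r)) X Y"
        by (simp add: lower_comp_inj[of \<sigma> S ?p] prod.reindex inj_on_subset[of \<sigma> UNIV])
    qed
    finally show ?thesis .
  qed
  have "ek_dX ?n k (Delta_L cs) X Y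
      = (\<Sum>S | S \<subseteq> {..<?n} \<and> card S = k. \<Sum>\<sigma> | \<sigma> permutes {..<?n}. G \<sigma> (\<sigma> ` S))"
    unfolding ek_dX_def by (intro sum.cong refl) (simp add: derivative)
  also have "\<dots> = (\<Sum>T | T \<subseteq> {..<?n} \<and> card T = k. \<Sum>\<sigma> | \<sigma> permutes {..<?n}. G \<sigma> T)"
    by (rule sum_subsets_permutes_image)
  also have "\<dots> = (\<Sum>T | T \<subseteq> {..<?n} \<and> card T = k.
                      epsilon cs (ek_diag T cs) * Delta (ek_diag T cs) X Y)"
    unfolding G_def
    by (intro sum.cong refl) (simp add: epsilon_mult_Delta_ek_diag sum_distrib_left mult_ac)
  finally show ?thesis .
qed

theorem mainTheorem2:
  fixes cs :: "(nat \<times> nat) list" and k :: nat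
  assumes "sorted_wrt cell_less cs"
    and "k \<ge> 1"
  shows "(\<forall>X Y. ek_dX (length cs) k (Delta_L cs) X Y =
            (\<Sum>S\<in>{S. S \<subseteq> {..<length cs} \<and> card S = k}.
               epsilon cs (ek_diag S cs) * Delta (ek_diag S cs) X Y))
       \<and> (\<forall>S. S \<subseteq> {..<length cs} \<and> card S = k \<and> Delta (ek_diag S cs) \<noteq> (\<lambda>X Y. 0)
              \<longrightarrow> (\<exists>m::nat. m > 0 \<and> epsilon cs (ek_diag S cs) = real m))"
  using ek_dX_Delta_L epsilon_ek_diag_eq_pos_nat by blast

end
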